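(* Let $p$ be uniformly distributed on $(0,1)$ and, conditionally on $p$, let $X_1,X_2,\dots$ be i.i.d. with $P(X_i=j\mid p)=p(1-p)^{j-1}$, $j=1,2,\dots$. Let $K_n$ be the number of distinct values among $X_1,\dots,X_n$, and define $$\overrightarrow\nu(x)=\int_0^1\#\{j\ge1:\ p(1-p)^{j-1}\ge x\}\,dp,\qquad x\in(0,1).$$ Then $$\overrightarrow\nu(x)=\tfrac12\big(\log(1/x)\big)^2-\gamma\log(1/x)+O(1),\qquad x\to0,$$ and $$\mathrm{E}(K_n)=\tfrac12(\log n)^2+o(\log n),\qquad n\to\infty,$$ where $\gamma$ is the Euler–Mascheroni constant.
   Context: This is the geometric stick-breaking process with uniform prior on the success probability $p$; $\mathrm{E}(K_n)$ is the unconditional expectation (averaging over $p$ and the draws). *)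

theory Defs
  imports "HOL-Probability.Probability" "HOL-Library.Landau_Symbols"
begin

text \<open>Law of X_i given p: P(X_i = j | p) = p (1-p)^(j-1), j = 1,2,...
  (the library geometric_pmf lives on 0,1,2,... so we shift by one).\<close>
definition geom1_pmf :: "real \<Rightarrow> nat pmf" where
  "geom1_pmf p = map_pmf Suc (geometric_pmf p)"

definition sample_pmf :: "real \<Rightarrow> nat \<Rightarrow> (nat \<Rightarrow> nat) pmf" where
  "sample_pmf p n = Pi_pmf {..<n} 0 (\<lambda>_. geom1_pmf p)"

definition K :: "nat \<Rightarrow> (nat \<Rightarrow> nat) \<Rightarrow> nat" where
  "K n X = card (X ` {..<n})"

definition EK :: "nat \<Rightarrow> real" where
  "EK n = (LBINT p:{0<..<1}. measure_pmf.expectation (sample_pmf p n) (\<lambda>X. real (K n X)))"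

definition nu :: "real \<Rightarrow> real" where
  "nu x = (LBINT p:{0<..<1}. real (card {j::nat. 1 \<le> j \<and> p * (1 - p) ^ (j - 1) \<ge> x}))"

end

theory Submission
  imports Defs "HOL-Real_Asymp.Real_Asymp"
begin

(*
  With r = -ln(1-p), the count #{j \<ge> 1. p (1-p)^(j-1) \<ge> x} equals 1 + \<lfloor>ln(p/x)/r\<rfloor> for x \<le> p,
  so \<nu>(x) is within 1 of \<integral>_x^1 ln(p/x)/r dp. Splitting 1/r = 1/p + g(p), the main part
  \<integral>_x^1 ln(p/x)/p dp = (ln(1/x))^2/2 is exact, g is bounded, and \<integral>_0^1 g = -\<gamma>: this follows
  from the Frullani-type integral \<integral>_0^1 (1-(1-p)^k)/r dp = ln(k+1), compared with
  \<integral>_0^1 (1-(1-p)^k)/p dp = H_k, as k \<rightarrow> \<infinity>.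

  Given p, E(K_n) = \<Sum>_j (1 - (1 - p(1-p)^j)^n). Writing F_n(y) = \<integral>_0^y (1-(1-s)^n)/s ds, the
  summand is the derivative of t \<mapsto> F_n(e^t), sampled on a grid of mesh r in t; monotonicity
  sandwiches the sum between F_n(p)/r and F_n(p)/r + 1. By the Frullani integral,
  \<integral>_0^1 F_n(p)/r dp = \<Sum>_{k\<le>n} ln(k+1)/k, which is (ln n)^2/2 + O(1).
*)

section \<open>Elementary integrals\<close>

lemma has_integral_powr_base:
  fixes q a :: real
  assumes "0 < q" "q \<noteq> 1" "0 \<le> a"
  shows "((\<lambda>t. q powr t) has_integral (q powr a - 1) / ln q) {0..a}"
proof -
  have "((\<lambda>t. q powr t) has_integral (q powr a / ln q - q powr 0 / ln q)) {0..a}"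
  proof (rule fundamental_theorem_of_calculus)
    fix t assume "t \<in> {0..a}"
    have "((\<lambda>t. exp (t * ln q) / ln q) has_real_derivative exp (t * ln q)) (at t within {0..a})"
      using assms by (auto intro!: derivative_eq_intros)
    then show "((\<lambda>t. q powr t / ln q) has_vector_derivative q powr t) (at t within {0..a})"
      using assms by (simp add: powr_def has_real_derivative_iff_has_vector_derivative)
  qed (use assms in auto)
  then show ?thesis
    using assms by (simp add: diff_divide_distrib)
qed

lemma has_integral_one_minus_powr:
  fixes t :: real
  assumes "0 \<le> t"
  shows "((\<lambda>p. (1 - p) powr t) has_integral 1 / (t + 1)) {0..1}"
proof -
  define F where "F = (\<lambda>p::real. - ((1 - p) powr (t + 1) / (t + 1)))"
  have "((\<lambda>p. (1 - p) powr t) has_integral (F 1 - F 0)) {0..1}"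
  proof (rule fundamental_theorem_of_calculus_interior)
    show "continuous_on {0..1} F"
      unfolding F_def using assms by (intro continuous_intros continuous_on_powr') auto
    fix p :: real assume "p \<in> {0<..<1}"
    then have "(F has_real_derivative - ((t + 1) * (1 - p) powr (t + 1 - of_nat 1) * (-1) / (t + 1))) (at p)"
      unfolding F_def by (intro DERIV_minus DERIV_cdivide DERIV_fun_powr derivative_eq_intros) auto
    then show "(F has_vector_derivative (1 - p) powr t) (at p)"
      using assms by (simp add: has_real_derivative_iff_has_vector_derivative)
  qed simp
  then show ?thesis
    using assms by (simp add: F_def)
qed

lemma has_integral_inverse_plus_one:
  fixes a :: real
  assumes "0 \<le> a"
  shows "((\<lambda>t. 1 / (t + 1)) has_integral ln (a + 1)) {0..a}"
proof -
  have "((\<lambda>t. 1 / (t + 1)) has_integral (ln (a + 1) - ln (0 + 1))) {0..a}"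
  proof (rule fundamental_theorem_of_calculus)
    fix t assume "t \<in> {0..a}"
    then show "((\<lambda>t. ln (t + 1)) has_vector_derivative 1 / (t + 1)) (at t within {0..a})"
      unfolding has_real_derivative_iff_has_vector_derivative[symmetric]
      by (auto intro!: derivative_eq_intros simp: field_simps)
  qed (use assms in auto)
  then show ?thesis
    by simp
qed

text \<open>A Frullani integral, computed by exchanging the order of integration in
  \<open>\<integral>\<^sub>0\<^sup>1 \<integral>\<^sub>0\<^sup>k (1 - p) powr t dt dp\<close>.\<close>

lemma has_integral_one_minus_power_div_ln:
  "((\<lambda>p. (1 - (1 - p) ^ k) / - ln (1 - p)) has_integral ln (real k + 1)) {0..1}"
proof -
  define Q where "Q = (\<lambda>p::real. (1 - (1 - p) ^ k) / - ln (1 - p))"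
  define f where "f = (\<lambda>p t::real. indicator {0<..<1} p * indicator {0..real k} t * (1 - p) powr t)"
  have inner_t: "(\<integral>\<^sup>+t. ennreal (f p t) \<partial>lborel) = ennreal (indicator {0<..<1} p * Q p)" for p
  proof (cases "p \<in> {0<..<1}")
    case True
    have "((1 - p) powr real k - 1) / ln (1 - p) = Q p"
      using True by (simp add: Q_def powr_realpow divide_simps)
    then have "((\<lambda>t. (1 - p) powr t) has_integral Q p) {0..real k}"
      using has_integral_powr_base[of "1 - p" "real k"] True by simp
    then have "(\<integral>\<^sup>+t. ennreal ((1 - p) powr t) * indicator {0..real k} t \<partial>lborel) = ennreal (Q p)"
      by (intro nn_integral_has_integral_lebesgue') auto
    moreover have "(\<integral>\<^sup>+t. ennreal (f p t) \<partial>lborel)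
        = (\<integral>\<^sup>+t. ennreal ((1 - p) powr t) * indicator {0..real k} t \<partial>lborel)"
      using True by (intro nn_integral_cong) (auto simp: f_def indicator_def)
    ultimately show ?thesis
      using True by simp
  qed (simp add: f_def)
  have inner_p: "(\<integral>\<^sup>+p. ennreal (f p t) \<partial>lborel) = ennreal (1 / (t + 1)) * indicator {0..real k} t" for t
  proof (cases "t \<in> {0..real k}")
    case True
    have "(\<integral>\<^sup>+p. ennreal ((1 - p) powr t) * indicator {0<..<1} p \<partial>lborel) = ennreal (1 / (t + 1))"
      using True has_integral_one_minus_powr[of t]
      by (intro nn_integral_has_integral_lebesgue') (auto simp: has_integral_Icc_iff_Ioo)
    moreover have "(\<integral>\<^sup>+p. ennreal (f p t) \<partial>lborel)
        = (\<integral>\<^sup>+p. ennreal ((1 - p) powr t) * indicator {0<..<1} p \<partial>lborel)"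
      using True by (intro nn_integral_cong) (auto simp: f_def indicator_def)
    ultimately show ?thesis
      using True by simp
  qed (simp add: f_def)
  have f_meas: "(\<lambda>(p, t). ennreal (f p t)) \<in> borel_measurable (lborel \<Otimes>\<^sub>M lborel)"
    unfolding f_def by measurable
  have "(\<integral>\<^sup>+p. ennreal (indicator {0<..<1} p * Q p) \<partial>lborel)
      = (\<integral>\<^sup>+t. ennreal (1 / (t + 1)) * indicator {0..real k} t \<partial>lborel)"
    using lborel_pair.Fubini'[OF f_meas] by (simp only: inner_t inner_p)
  also have "\<dots> = ennreal (ln (real k + 1))"
    by (rule nn_integral_has_integral_lebesgue'[OF _ has_integral_inverse_plus_one]) auto
  finally have "((\<lambda>p. indicator {0<..<1} p * Q p) has_integral ln (real k + 1)) UNIV"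
  proof (rule nn_integral_has_integral[rotated 2])
    show "(\<lambda>p. indicator {0<..<1} p * Q p) \<in> borel_measurable borel"
      unfolding Q_def by measurable
    show "0 \<le> indicator {0<..<1} p * Q p" for p
      unfolding Q_def indicator_def
      by (auto intro!: divide_nonneg_nonneg simp: power_le_one simp del: divide_minus_right)
  qed simp
  moreover have "(\<lambda>p. indicator {0<..<1} p * Q p) = (\<lambda>p. if p \<in> {0<..<1} then Q p else 0)"
    by (auto simp: indicator_def)
  ultimately have "(Q has_integral ln (real k + 1)) {0<..<1}"
    by (simp only: has_integral_restrict_UNIV)
  then show ?thesis
    unfolding Q_def by (simp add: has_integral_Icc_iff_Ioo)
qed

lemma has_integral_one_minus_power:
  "((\<lambda>p::real. (1 - p) ^ k) has_integral 1 / (real k + 1)) {0..1}"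
proof -
  define F :: "real \<Rightarrow> real" where "F = (\<lambda>p. - ((1 - p) ^ Suc k) / (real k + 1))"
  have "((\<lambda>p::real. (1 - p) ^ k) has_integral (F 1 - F 0)) {0..1}"
  proof (rule fundamental_theorem_of_calculus)
    fix p :: real assume "p \<in> {0..1}"
    have "(F has_real_derivative
        - (of_nat (Suc k) * ((0 - 1) * (1 - p) ^ (Suc k - Suc 0))) / (real k + 1)) (at p within {0..1})"
      unfolding F_def by (intro DERIV_minus DERIV_cdivide DERIV_power DERIV_diff DERIV_const DERIV_ident)
    moreover have "- (of_nat (Suc k) * ((0 - 1) * (1 - p) ^ (Suc k - Suc 0))) / (real k + 1) = (1 - p) ^ k"
      by (simp add: field_simps)
    ultimately have "(F has_real_derivative (1 - p) ^ k) (at p within {0..1})"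
      by simp
    then show "(F has_vector_derivative (1 - p) ^ k) (at p within {0..1})"
      by (simp add: has_real_derivative_iff_has_vector_derivative)
  qed simp
  then show ?thesis
    by (simp add: F_def)
qed

lemma has_integral_one_minus_power_div:
  "((\<lambda>p::real. (1 - (1 - p) ^ n) / p) has_integral harm n) {0..1}"
proof (rule has_integral_spike[OF negligible_sing[of 0]])
  have "((\<lambda>p::real. \<Sum>k<n. (1 - p) ^ k) has_integral (\<Sum>k<n. 1 / (real k + 1))) {0..1}"
    by (intro has_integral_sum has_integral_one_minus_power) auto
  moreover have "(\<Sum>k<n. 1 / (real k + 1)) = harm n"
    by (induction n) (simp_all add: harm_def harm_Suc field_simps)
  ultimately show "((\<lambda>p::real. \<Sum>k<n. (1 - p) ^ k) has_integral harm n) {0..1}"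
    by simp
  fix p :: real assume "p \<in> {0..1} - {0}"
  then show "(1 - (1 - p) ^ n) / p = (\<Sum>k<n. (1 - p) ^ k)"
    by (simp add: one_diff_power_eq field_simps)
qed

lemma bounded_continuous_imp_absolutely_integrable_Icc:
  fixes f :: "real \<Rightarrow> real"
  assumes "continuous_on {a<..<b} f" "\<And>x. x \<in> {a<..<b} \<Longrightarrow> \<bar>f x\<bar> \<le> M"
  shows "f absolutely_integrable_on {a..b}"
proof -
  have "f \<in> borel_measurable (lebesgue_on {a<..<b})"
    by (rule continuous_imp_measurable_on_sets_lebesgue[OF assms(1)]) auto
  moreover have "(\<lambda>_. M) integrable_on {a<..<b}"
    using integrable_const_ivl[of M a b] by (simp add: integrable_on_Icc_iff_Ioo)
  ultimately have "f absolutely_integrable_on {a<..<b}"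
    using assms(2) by (intro measurable_bounded_by_integrable_imp_absolutely_integrable) auto
  then show ?thesis
    by (simp add: absolutely_integrable_on_Icc_iff_Ioo)
qed

lemma set_integral_squeeze_Ioo:
  fixes f g :: "real \<Rightarrow> real"
  assumes f_meas: "f \<in> borel_measurable borel" and g_meas: "g \<in> borel_measurable borel"
    and f_int: "(f has_integral I) {a<..<b}" and "a \<le> b"
    and f_nonneg: "\<And>x. x \<in> {a<..<b} \<Longrightarrow> 0 \<le> f x"
    and squeeze: "\<And>x. x \<in> {a<..<b} \<Longrightarrow> f x \<le> g x \<and> g x \<le> f x + c"
  shows "\<bar>(LBINT x:{a<..<b}. g x) - I\<bar> \<le> c * (b - a)"
proof -
  have "f absolutely_integrable_on {a<..<b}"
    using f_int f_nonneg by (intro nonnegative_absolutely_integrable_1) auto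
  then have f_set_int: "set_integrable lborel {a<..<b} f"
    unfolding set_integrable_def using f_meas
    by (subst (asm) integrable_completion) auto
  have const_int: "set_integrable lborel {a<..<b} (\<lambda>_. c)"
    unfolding set_integrable_def
    using \<open>a \<le> b\<close> by (intro integrable_scaleR_left integrable_real_indicator) auto
  have diff_int: "set_integrable lborel {a<..<b} (\<lambda>x. g x - f x)"
  proof (rule set_integrable_bound[OF const_int])
    show "set_borel_measurable lborel {a<..<b} (\<lambda>x. g x - f x)"
      using f_meas g_meas by (auto simp: set_borel_measurable_def)
    show "AE x in lborel. x \<in> {a<..<b} \<longrightarrow> norm (g x - f x) \<le> norm c"
      using squeeze by (intro AE_I2) force
  qed
  have "(LBINT x:{a<..<b}. f x) = I"
    using f_int set_borel_integral_eq_integral(2)[OF f_set_int] by (simp add: integral_unique)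
  moreover have "(LBINT x:{a<..<b}. g x) = (LBINT x:{a<..<b}. f x + (g x - f x))"
    by simp
  ultimately have "(LBINT x:{a<..<b}. g x) - I = (LBINT x:{a<..<b}. g x - f x)"
    by (simp only: set_integral_add(2)[OF f_set_int diff_int])
  moreover have "(LBINT x:{a<..<b}. 0) \<le> (LBINT x:{a<..<b}. g x - f x)"
    using squeeze by (intro set_integral_mono[OF _ diff_int]) (simp_all add: set_integrable_def)
  moreover have "(LBINT x:{a<..<b}. g x - f x) \<le> (LBINT x:{a<..<b}. c)"
    using squeeze by (intro set_integral_mono[OF diff_int const_int]) (simp add: add.commute diff_le_eq)
  ultimately show ?thesis
    using \<open>a \<le> b\<close> by (simp add: set_integral_const mult.commute)
qed

section \<open>The gap between \<open>1 / - ln (1 - p)\<close> and \<open>1 / p\<close>\<close>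

lemma ln_one_minus_bounds:
  fixes p :: real
  assumes "0 < p" "p < 1"
  shows "p \<le> - ln (1 - p)" "- ln (1 - p) * (1 - p) \<le> p"
proof -
  show "p \<le> - ln (1 - p)"
    using ln_le_minus_one[of "1 - p"] assms by simp
  have "ln (1 / (1 - p)) \<le> 1 / (1 - p) - 1"
    using ln_le_minus_one[of "1 / (1 - p)"] assms by simp
  then have "- ln (1 - p) \<le> p / (1 - p)"
    using assms by (simp add: ln_div field_simps)
  then show "- ln (1 - p) * (1 - p) \<le> p"
    using assms by (simp add: field_simps)
qed

definition recip_log_gap :: "real \<Rightarrow> real" where
  "recip_log_gap p = 1 / - ln (1 - p) - 1 / p"

lemma recip_log_gap_bounds:
  fixes p :: real
  assumes "0 < p" "p < 1"
  shows "-1 \<le> recip_log_gap p" "recip_log_gap p \<le> 0"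
proof -
  define r where "r = - ln (1 - p)"
  have "p \<le> r" "r * (1 - p) \<le> p"
    using ln_one_minus_bounds[OF assms] by (auto simp: r_def)
  moreover have "0 < r"
    using assms by (simp add: r_def)
  ultimately show "recip_log_gap p \<le> 0" "-1 \<le> recip_log_gap p"
    using assms unfolding recip_log_gap_def r_def[symmetric]
    by (simp_all add: frac_le field_simps)
qed

lemma abs_recip_log_gap_le_1:
  fixes p :: real
  assumes "0 \<le> p" "p \<le> 1"
  shows "\<bar>recip_log_gap p\<bar> \<le> 1"
proof (cases "p = 0 \<or> p = 1")
  case True
  then show ?thesis
    by (auto simp: recip_log_gap_def)
next
  case False
  then show ?thesis
    using assms recip_log_gap_bounds[of p] by auto
qed

lemma recip_log_gap_absolutely_integrable: "recip_log_gap absolutely_integrable_on {0..1}"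
proof (rule bounded_continuous_imp_absolutely_integrable_Icc[where M = 1])
  show "continuous_on {0<..<1} recip_log_gap"
    unfolding recip_log_gap_def by (auto intro!: continuous_intros)
qed (simp add: abs_recip_log_gap_le_1)

lemma tendsto_integral_one_minus_power_times_recip_log_gap:
  "(\<lambda>n. integral {0..1} (\<lambda>p. (1 - (1 - p) ^ n) * recip_log_gap p)) \<longlonglongrightarrow> integral {0..1} recip_log_gap"
proof -
  have bound: "\<bar>(1 - (1 - p) ^ n) * recip_log_gap p\<bar> \<le> 1" if "p \<in> {0..1}" for n p
  proof -
    have "\<bar>1 - (1 - p) ^ n\<bar> \<le> 1"
      using that by (auto simp: power_le_one)
    then show ?thesis
      using abs_recip_log_gap_le_1[of p] that by (simp add: abs_mult mult_le_one)
  qed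
  have "(\<lambda>p. (1 - (1 - p) ^ n) * recip_log_gap p) absolutely_integrable_on {0..1}" for n
  proof (rule bounded_continuous_imp_absolutely_integrable_Icc[where M = 1])
    show "continuous_on {0<..<1} (\<lambda>p. (1 - (1 - p) ^ n) * recip_log_gap p)"
      unfolding recip_log_gap_def by (auto intro!: continuous_intros)
  qed (use bound in auto)
  then have "(\<lambda>p. (1 - (1 - p) ^ n) * recip_log_gap p) integrable_on {0..1}" for n
    by (rule set_lebesgue_integral_eq_integral(1))
  moreover have "(\<lambda>n. (1 - (1 - p) ^ n) * recip_log_gap p) \<longlonglongrightarrow> recip_log_gap p"
    if "p \<in> {0..1}" for p
  proof (cases "p = 0")
    case False
    then have "(\<lambda>n. (1 - (1 - p) ^ n) * recip_log_gap p) \<longlonglongrightarrow> (1 - 0) * recip_log_gap p"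
      using that by (intro tendsto_intros LIMSEQ_realpow_zero) auto
    then show ?thesis
      by simp
  qed (simp add: recip_log_gap_def)
  ultimately show ?thesis
    using bound by (intro dominated_convergence(2)[where h = "\<lambda>_. 1"]) (auto simp: integrable_const_ivl)
qed

text \<open>Against \<open>1 - (1 - p) ^ n\<close>, the two parts of the gap integrate to \<open>ln (n + 1)\<close> and \<open>harm n\<close>.\<close>

lemma has_integral_recip_log_gap: "(recip_log_gap has_integral - euler_mascheroni) {0..1}"
proof -
  have "((\<lambda>p. (1 - (1 - p) ^ n) / - ln (1 - p) - (1 - (1 - p) ^ n) / p)
      has_integral (ln (real n + 1) - harm n)) {0..1}" for n
    by (intro has_integral_diff has_integral_one_minus_power_div_ln has_integral_one_minus_power_div)
  then have "integral {0..1} (\<lambda>p. (1 - (1 - p) ^ n) * recip_log_gap p) = ln (real n + 1) - harm n" for n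
    by (intro integral_unique) (simp add: recip_log_gap_def right_diff_distrib)
  moreover have "(\<lambda>n. (ln (real n + 1) - ln (real n)) - (harm n - ln (real n)))
      \<longlonglongrightarrow> 0 - euler_mascheroni"
    by (intro tendsto_diff euler_mascheroni_LIMSEQ) real_asymp
  ultimately have "integral {0..1} recip_log_gap = - euler_mascheroni"
    using tendsto_integral_one_minus_power_times_recip_log_gap LIMSEQ_unique by fastforce
  moreover have "recip_log_gap integrable_on {0..1}"
    using recip_log_gap_absolutely_integrable set_lebesgue_integral_eq_integral(1) by blast
  ultimately show ?thesis
    by (metis has_integral_integral)
qed

section \<open>The estimate for \<open>\<nu>\<close>\<close>

lemma has_integral_ln_ratio_div:
  fixes x :: real
  assumes "0 < x" "x \<le> 1"
  shows "((\<lambda>p. ln (p / x) / p) has_integral (ln (1 / x))\<^sup>2 / 2) {x..1}"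
proof -
  define F where "F = (\<lambda>p. (ln (p / x))\<^sup>2 / 2)"
  have "((\<lambda>p. ln (p / x) / p) has_integral (F 1 - F x)) {x..1}"
  proof (rule fundamental_theorem_of_calculus)
    fix p assume "p \<in> {x..1}"
    then have "(F has_real_derivative (ln (p / x) / p)) (at p within {x..1})"
      unfolding F_def using assms
      by (auto intro!: derivative_eq_intros simp: field_simps power2_eq_square)
    then show "(F has_vector_derivative (ln (p / x) / p)) (at p within {x..1})"
      by (simp add: has_real_derivative_iff_has_vector_derivative)
  qed (use assms in auto)
  then show ?thesis
    using assms by (simp add: F_def)
qed

lemma abs_integral_recip_log_gap_le:
  fixes x :: real
  assumes "0 \<le> x" "x \<le> 1"
  shows "\<bar>integral {0..x} recip_log_gap\<bar> \<le> x"
proof -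
  have integrable: "recip_log_gap integrable_on {0..x}"
    using assms
    by (intro integrable_subinterval_real[OF has_integral_integrable[OF has_integral_recip_log_gap]]) auto
  have "norm (recip_log_gap p) \<le> 1" if "p \<in> {0..x} - {}" for p
    using that assms abs_recip_log_gap_le_1 by simp
  from has_integral_bound_real[OF zero_le_one finite.emptyI integrable_integral[OF integrable] this]
  show ?thesis
    using assms by simp
qed

lemma has_integral_neg_ln:
  fixes x :: real
  assumes "0 < x" "x \<le> 1"
  shows "((\<lambda>p. - ln p) has_integral 1 - x + x * ln x) {x..1}"
proof -
  define G where "G = (\<lambda>p::real. p - p * ln p)"
  have "((\<lambda>p. - ln p) has_integral (G 1 - G x)) {x..1}"
  proof (rule fundamental_theorem_of_calculus)
    fix p assume "p \<in> {x..1}"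
    then have "(G has_real_derivative (- ln p)) (at p within {x..1})"
      unfolding G_def using assms by (auto intro!: derivative_eq_intros simp: field_simps)
    then show "(G has_vector_derivative (- ln p)) (at p within {x..1})"
      by (simp add: has_real_derivative_iff_has_vector_derivative)
  qed (use assms in auto)
  then show ?thesis
    by (simp add: G_def algebra_simps)
qed

lemma ln_times_recip_log_gap_integral:
  fixes x :: real
  assumes "0 < x" "x \<le> 1"
  shows "(\<lambda>p. ln p * recip_log_gap p) integrable_on {x..1}"
    and "\<bar>integral {x..1} (\<lambda>p. ln p * recip_log_gap p)\<bar> \<le> 1"
proof -
  have bound: "\<bar>ln p * recip_log_gap p\<bar> \<le> - ln p" if "p \<in> {x..1}" for p
  proof -
    have "\<bar>ln p\<bar> * \<bar>recip_log_gap p\<bar> \<le> \<bar>ln p\<bar> * 1"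
      using that assms abs_recip_log_gap_le_1[of p] by (intro mult_left_mono) auto
    then show ?thesis
      using that assms by (simp add: abs_mult)
  qed
  have "(\<lambda>p. ln p * recip_log_gap p) absolutely_integrable_on {x..1}"
  proof (rule bounded_continuous_imp_absolutely_integrable_Icc[where M = "- ln x"])
    show "continuous_on {x<..<1} (\<lambda>p. ln p * recip_log_gap p)"
      unfolding recip_log_gap_def using assms by (auto intro!: continuous_intros)
    fix p assume "p \<in> {x<..<1}"
    moreover from this have "ln x < ln p"
      using assms by simp
    ultimately show "\<bar>ln p * recip_log_gap p\<bar> \<le> - ln x"
      using bound[of p] by auto
  qed
  then show integrable: "(\<lambda>p. ln p * recip_log_gap p) integrable_on {x..1}"
    using set_lebesgue_integral_eq_integral(1) by blast
  have "norm (integral {x..1} (\<lambda>p. ln p * recip_log_gap p)) \<le> integral {x..1} (\<lambda>p. - ln p)"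
    using has_integral_neg_ln[OF assms] bound by (intro integral_norm_bound_integral[OF integrable]) auto
  also have "\<dots> = 1 - x + x * ln x"
    using has_integral_neg_ln[OF assms] by (rule integral_unique)
  also have "\<dots> \<le> 1"
    using assms ln_le_minus_one[of x] by (simp add: mult_nonneg_nonpos)
  finally show "\<bar>integral {x..1} (\<lambda>p. ln p * recip_log_gap p)\<bar> \<le> 1"
    by simp
qed

text \<open>Split \<open>ln (p / x) / - ln (1 - p)\<close> as \<open>ln (p / x) / p + (L + ln p) * recip_log_gap p\<close> with
  \<open>L = ln (1 / x)\<close>; the first part gives \<open>L\<^sup>2 / 2\<close>, the second \<open>- \<gamma> L + O(1)\<close>.\<close>

lemma has_integral_ln_ratio_div_ln:
  fixes x :: real
  defines "L \<equiv> ln (1 / x)"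
  assumes "0 < x" "x < 1"
  shows "((\<lambda>p. ln (p / x) / - ln (1 - p)) has_integral
    L\<^sup>2 / 2 + L * integral {x..1} recip_log_gap + integral {x..1} (\<lambda>p. ln p * recip_log_gap p)) {x..1}"
proof -
  have gap_int: "recip_log_gap integrable_on {0..1}"
    using has_integral_recip_log_gap by blast
  have "((\<lambda>p. ln (p / x) / p + L * recip_log_gap p + ln p * recip_log_gap p) has_integral
      L\<^sup>2 / 2 + L * integral {x..1} recip_log_gap + integral {x..1} (\<lambda>p. ln p * recip_log_gap p)) {x..1}"
    unfolding L_def using assms
    by (intro has_integral_add has_integral_ln_ratio_div has_integral_mult_right integrable_integral
        integrable_subinterval_real[OF gap_int] ln_times_recip_log_gap_integral(1)) auto
  moreover have "ln (p / x) / p + L * recip_log_gap p + ln p * recip_log_gap p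
      = ln (p / x) / - ln (1 - p)" if "p \<in> {x..1}" for p
    using that assms unfolding recip_log_gap_def L_def
    by (simp add: ln_div diff_divide_distrib add_divide_distrib right_diff_distrib)
  ultimately show ?thesis
    by (rule has_integral_eq[rotated])
qed

lemma integral_ln_ratio_div_ln_estimate:
  fixes x :: real
  defines "L \<equiv> ln (1 / x)"
  assumes "0 < x" "x < 1"
  shows "\<bar>integral {x..1} (\<lambda>p. ln (p / x) / - ln (1 - p)) - (L\<^sup>2 / 2 - euler_mascheroni * L)\<bar> \<le> 2"
proof -
  have L: "0 \<le> L" "L * x \<le> 1"
    using assms ln_le_minus_one[of "1 / x"] by (auto simp: L_def field_simps)
  have gap_split: "integral {x..1} recip_log_gap = - euler_mascheroni - integral {0..x} recip_log_gap"
    using Henstock_Kurzweil_Integration.integral_combine[OF _ _ has_integral_integrable[OF has_integral_recip_log_gap], of x]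
      integral_unique[OF has_integral_recip_log_gap] assms by simp
  have "integral {x..1} (\<lambda>p. ln (p / x) / - ln (1 - p))
      = L\<^sup>2 / 2 + L * integral {x..1} recip_log_gap + integral {x..1} (\<lambda>p. ln p * recip_log_gap p)"
    unfolding L_def by (rule integral_unique[OF has_integral_ln_ratio_div_ln[OF assms(2,3)]])
  then have "\<bar>integral {x..1} (\<lambda>p. ln (p / x) / - ln (1 - p)) - (L\<^sup>2 / 2 - euler_mascheroni * L)\<bar>
      = \<bar>integral {x..1} (\<lambda>p. ln p * recip_log_gap p) - L * integral {0..x} recip_log_gap\<bar>"
    unfolding gap_split by (simp add: algebra_simps)
  also have "\<dots> \<le> 1 + L * x"
  proof -
    have "\<bar>L * integral {0..x} recip_log_gap\<bar> \<le> L * x"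
      using abs_integral_recip_log_gap_le[of x] assms L(1) by (simp add: abs_mult mult_left_mono)
    then show ?thesis
      using ln_times_recip_log_gap_integral(2)[of x] assms
        abs_triangle_ineq4[of "integral {x..1} (\<lambda>p. ln p * recip_log_gap p)"]
      by linarith
  qed
  finally show ?thesis
    using L(2) by simp
qed

lemma geometric_ge_iff:
  fixes p x :: real
  assumes "0 < p" "p < 1" "0 < x"
  shows "x \<le> p * (1 - p) ^ m \<longleftrightarrow> real m \<le> ln (p / x) / - ln (1 - p)"
proof -
  have "x \<le> p * (1 - p) ^ m \<longleftrightarrow> ln x \<le> ln p + real m * ln (1 - p)"
    using assms by (simp add: ln_mult ln_realpow flip: ln_le_cancel_iff)
  also have "\<dots> \<longleftrightarrow> real m * - ln (1 - p) \<le> ln (p / x)"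
    using assms by (auto simp: ln_div algebra_simps)
  also have "\<dots> \<longleftrightarrow> real m \<le> ln (p / x) / - ln (1 - p)"
    using assms by (intro pos_le_divide_eq[symmetric]) simp
  finally show ?thesis .
qed

lemma card_geometric_superlevel:
  fixes p x :: real
  assumes "0 < p" "p < 1" "0 < x"
  shows "real (card {j::nat. 1 \<le> j \<and> p * (1 - p) ^ (j - 1) \<ge> x})
    = (if x \<le> p then of_int \<lfloor>ln (p / x) / - ln (1 - p)\<rfloor> + 1 else 0)"
proof (cases "x \<le> p")
  case True
  define M where "M = \<lfloor>ln (p / x) / - ln (1 - p)\<rfloor>"
  have "0 \<le> ln (p / x) / - ln (1 - p)"
    using True assms by (intro divide_nonneg_nonneg) auto
  then have "0 \<le> M"
    by (simp add: M_def)
  have "x \<le> p * (1 - p) ^ (j - 1) \<longleftrightarrow> int (j - 1) \<le> M" for j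
    using geometric_ge_iff[OF assms, of "j - 1"] by (simp add: M_def le_floor_iff)
  then have "{j::nat. 1 \<le> j \<and> p * (1 - p) ^ (j - 1) \<ge> x} = {1..nat M + 1}"
    using \<open>0 \<le> M\<close> by force
  then show ?thesis
    using True \<open>0 \<le> M\<close> by (simp add: M_def)
next
  case False
  have "p * (1 - p) ^ (j - 1) \<le> p" for j
    using assms by (simp add: mult_left_le power_le_one)
  then have "{j::nat. 1 \<le> j \<and> p * (1 - p) ^ (j - 1) \<ge> x} = {}"
    using False by (auto intro: order_trans)
  then have "card {j::nat. 1 \<le> j \<and> p * (1 - p) ^ (j - 1) \<ge> x} = 0"
    by (simp only: card.empty)
  then show ?thesis
    using False by simp
qed

lemma nu_estimate:
  fixes x :: real
  assumes "0 < x" "x < 1"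
  shows "\<bar>nu x - ((1/2) * (ln (1/x))^2 - euler_mascheroni * ln (1/x))\<bar> \<le> 3"
proof -
  define F where "F = (\<lambda>p. ln (p / x) / - ln (1 - p))"
  define B where "B = (\<lambda>p. if x < p then F p else 0)"
  define C where "C = (\<lambda>p. if x \<le> p then of_int \<lfloor>F p\<rfloor> + 1 else (0::real))"
  have F_nonneg: "0 \<le> F p" if "x \<le> p" "p < 1" for p
    unfolding F_def by (rule divide_nonneg_nonneg) (use that assms in auto)
  have "F integrable_on {x..1}"
    unfolding F_def using has_integral_ln_ratio_div_ln[OF assms] by blast
  then have "(F has_integral integral {x..1} F) {x<..<1}"
    unfolding has_integral_Icc_iff_Ioo[symmetric] by (rule integrable_integral)
  then have "((\<lambda>p. if p \<in> {x<..<1} then F p else 0) has_integral integral {x..1} F) {0<..<1}"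
    using assms by (subst has_integral_restrict) auto
  then have B_int: "(B has_integral integral {x..1} F) {0<..<1}"
    by (rule has_integral_eq[rotated]) (auto simp: B_def)
  have squeeze: "B p \<le> C p \<and> C p \<le> B p + 1" if "p \<in> {0<..<1}" for p
    using that F_nonneg[of p] fun_cong[OF F_def, of x]
    by (auto simp: B_def C_def intro: less_imp_le[OF real_of_int_floor_add_one_gt])
  have "B \<in> borel_measurable borel"
    unfolding B_def F_def by measurable
  moreover have "C \<in> borel_measurable borel"
    unfolding C_def F_def by measurable
  ultimately have "\<bar>(LBINT p:{0<..<1}. C p) - integral {x..1} F\<bar> \<le> 1 * (1 - 0)"
    using B_int squeeze F_nonneg by (intro set_integral_squeeze_Ioo) (auto simp: B_def)
  moreover have "nu x = (LBINT p:{0<..<1}. C p)"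
    unfolding nu_def using card_geometric_superlevel[of _ x] assms
    by (intro set_lebesgue_integral_cong) (auto simp: C_def F_def)
  ultimately have "\<bar>nu x - integral {x..1} F\<bar> \<le> 1"
    by simp
  then show ?thesis
    using integral_ln_ratio_div_ln_estimate[OF assms] by (simp add: F_def)
qed

section \<open>The expected number of distinct values\<close>

lemma pmf_geom1_pmf:
  assumes "0 < p" "p < 1"
  shows "pmf (geom1_pmf p) j = (if j = 0 then 0 else p * (1 - p) ^ (j - 1))"
proof (cases j)
  case 0
  then show ?thesis
    unfolding geom1_pmf_def by (auto intro: pmf_map_outside)
next
  case (Suc i)
  then show ?thesis
    unfolding geom1_pmf_def Suc using assms by (subst pmf_map_inj') (auto simp: inj_def)
qed

lemma prob_in_image_Pi_pmf:
  assumes "finite A"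
  shows "measure_pmf.prob (Pi_pmf A d (\<lambda>_. q)) {X. j \<in> X ` A} = 1 - (1 - pmf q j) ^ card A"
proof -
  have "measure_pmf.prob (Pi_pmf A d (\<lambda>_. q)) (Pi A (\<lambda>_. - {j}))
      = (\<Prod>i\<in>A. measure_pmf.prob q (- {j}))"
    using assms by (rule measure_Pi_pmf_Pi)
  also have "measure_pmf.prob q (- {j}) = 1 - pmf q j"
    using measure_pmf.prob_compl[of "{j}" q] by (simp add: measure_pmf_single Compl_eq_Diff_UNIV)
  finally have "measure_pmf.prob (Pi_pmf A d (\<lambda>_. q)) (Pi A (\<lambda>_. - {j})) = (1 - pmf q j) ^ card A"
    by simp
  moreover have "{X. j \<in> X ` A} = UNIV - Pi A (\<lambda>_. - {j})"
    by auto
  ultimately show ?thesis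
    using measure_pmf.prob_compl[of "Pi A (\<lambda>_. - {j})" "Pi_pmf A d (\<lambda>_. q)"] by simp
qed

lemma nn_integral_card_image:
  fixes M :: "('a \<Rightarrow> nat) pmf"
  assumes "finite A"
  shows "(\<integral>\<^sup>+X. ennreal (real (card (X ` A))) \<partial>M) = (\<Sum>j. emeasure M {X. j \<in> X ` A})"
proof -
  have "ennreal (real (card (X ` A))) = (\<Sum>j. indicator {X. j \<in> X ` A} X)" for X
  proof -
    have "(\<Sum>j. indicator (X ` A) j) = (\<Sum>j\<in>X ` A. indicator (X ` A) j :: ennreal)"
      using assms by (intro suminf_finite) auto
    then show ?thesis
      by (simp add: ennreal_of_nat_eq_real_of_nat indicator_def)
  qed
  then have "(\<integral>\<^sup>+X. ennreal (real (card (X ` A))) \<partial>M)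
      = (\<integral>\<^sup>+X. (\<Sum>j. indicator {X. j \<in> X ` A} X) \<partial>M)"
    by simp
  also have "\<dots> = (\<Sum>j. \<integral>\<^sup>+X. indicator {X. j \<in> X ` A} X \<partial>M)"
    by (rule nn_integral_suminf) simp
  finally show ?thesis
    by simp
qed

lemma summable_one_minus_one_minus_power:
  fixes q :: "nat \<Rightarrow> real"
  assumes "summable q" "\<And>j. 0 \<le> q j" "\<And>j. q j \<le> 1"
  shows "summable (\<lambda>j. 1 - (1 - q j) ^ n)"
proof (rule summable_comparison_test)
  show "summable (\<lambda>j. real n * q j)"
    using assms(1) by (rule summable_mult)
  have "norm (1 - (1 - q j) ^ n) \<le> real n * q j" for j
    using Bernoulli_inequality[of "- q j" n] assms(2,3)[of j] by (simp add: power_le_one)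
  then show "\<exists>N. \<forall>j\<ge>N. norm (1 - (1 - q j) ^ n) \<le> real n * q j"
    by blast
qed

lemma summable_one_minus_power_geometric:
  fixes p :: real
  assumes "0 < p" "p < 1"
  shows "summable (\<lambda>j. 1 - (1 - p * (1 - p) ^ j) ^ n)"
  using assms by (intro summable_one_minus_one_minus_power summable_mult summable_geometric)
    (auto simp: mult_le_one power_le_one)

lemma expectation_K_sample_pmf:
  assumes "0 < p" "p < 1"
  shows "measure_pmf.expectation (sample_pmf p n) (\<lambda>X. real (K n X)) = (\<Sum>j. 1 - (1 - p * (1 - p) ^ j) ^ n)"
proof -
  define a where "a = (\<lambda>j. 1 - (1 - pmf (geom1_pmf p) j) ^ n)"
  have a_Suc: "a (Suc j) = 1 - (1 - p * (1 - p) ^ j) ^ n" for j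
    using assms by (simp add: a_def pmf_geom1_pmf)
  have a_nonneg: "0 \<le> a j" for j
    unfolding a_def by (simp add: power_le_one pmf_le_1)
  have "summable a"
    using summable_one_minus_power_geometric[OF assms, of n] by (simp only: a_Suc[symmetric] summable_Suc_iff)
  have "(\<integral>\<^sup>+X. ennreal (real (K n X)) \<partial>sample_pmf p n) = (\<Sum>j. ennreal (a j))"
    unfolding K_def sample_pmf_def
    by (simp add: nn_integral_card_image measure_pmf.emeasure_eq_measure prob_in_image_Pi_pmf a_def)
  also have "\<dots> = ennreal (\<Sum>j. a j)"
    using a_nonneg \<open>summable a\<close> by (rule suminf_ennreal2)
  finally have "measure_pmf.expectation (sample_pmf p n) (\<lambda>X. real (K n X)) = (\<Sum>j. a j)"
    using suminf_nonneg[OF \<open>summable a\<close> a_nonneg] by (simp add: integral_eq_nn_integral)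
  also have "\<dots> = (\<Sum>j. a (Suc j))"
    using suminf_split_head[OF \<open>summable a\<close>] by (simp add: a_def pmf_geom1_pmf assms)
  finally show ?thesis
    by (simp only: a_Suc)
qed

text \<open>\<open>harm_poly n y = \<integral>\<^sub>0\<^sup>y (1 - (1 - s) ^ n) / s ds\<close>; in particular \<open>harm_poly n 1 = harm n\<close>.\<close>

definition harm_poly :: "nat \<Rightarrow> real \<Rightarrow> real" where
  "harm_poly n y = (\<Sum>k<n. (1 - (1 - y) ^ Suc k) / real (Suc k))"

lemma harm_poly_0 [simp]: "harm_poly n 0 = 0"
  by (simp add: harm_poly_def)

lemma harm_poly_nonneg: "0 \<le> y \<Longrightarrow> y \<le> 1 \<Longrightarrow> 0 \<le> harm_poly n y"
  unfolding harm_poly_def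
  by (intro sum_nonneg divide_nonneg_nonneg) (auto simp: power_le_one simp del: power_Suc)

lemma isCont_harm_poly: "isCont (harm_poly n) y"
  unfolding harm_poly_def by (intro continuous_intros) auto

lemma has_real_derivative_harm_poly_exp:
  "((\<lambda>t. harm_poly n (exp t)) has_real_derivative 1 - (1 - exp t) ^ n) (at t)"
proof -
  have "((\<lambda>t. (1 - (1 - exp t) ^ Suc k) / real (Suc k)) has_real_derivative exp t * (1 - exp t) ^ k) (at t)"
    for k
  proof -
    have "((\<lambda>t. (1 - (1 - exp t) ^ Suc k) / real (Suc k)) has_real_derivative
        (0 - of_nat (Suc k) * ((0 - exp t) * (1 - exp t) ^ (Suc k - Suc 0))) / real (Suc k)) (at t)"
      by (intro DERIV_cdivide DERIV_diff DERIV_const DERIV_power DERIV_exp)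
    moreover have "(0 - of_nat (Suc k) * ((0 - exp t) * (1 - exp t) ^ (Suc k - Suc 0))) / real (Suc k)
        = exp t * (1 - exp t) ^ k"
      by (simp add: field_simps)
    ultimately show ?thesis
      by simp
  qed
  then have "((\<lambda>t. harm_poly n (exp t)) has_real_derivative (\<Sum>k<n. exp t * (1 - exp t) ^ k)) (at t)"
    unfolding harm_poly_def by (intro DERIV_sum)
  moreover have "(\<Sum>k<n. exp t * (1 - exp t) ^ k) = 1 - (1 - exp t) ^ n"
    using one_diff_power_eq[of "1 - exp t" n] by (simp add: sum_distrib_left)
  ultimately show ?thesis
    by simp
qed

lemma harm_poly_diff_bounds:
  fixes u v :: real
  assumes "0 < u" "u \<le> v" "v \<le> 1"
  shows "(ln v - ln u) * (1 - (1 - u) ^ n) \<le> harm_poly n v - harm_poly n u"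
    and "harm_poly n v - harm_poly n u \<le> (ln v - ln u) * (1 - (1 - v) ^ n)"
proof -
  have mono: "1 - (1 - a) ^ n \<le> 1 - (1 - b) ^ n" if "0 \<le> a" "a \<le> b" "b \<le> 1" for a b :: real
    using that by (simp add: power_mono)
  have "\<exists>w. u \<le> w \<and> w \<le> v \<and> harm_poly n v - harm_poly n u = (ln v - ln u) * (1 - (1 - w) ^ n)"
  proof (cases "u = v")
    case False
    then have "ln u < ln v"
      using assms by simp
    then obtain z where z: "ln u < z" "z < ln v"
      and eq: "harm_poly n (exp (ln v)) - harm_poly n (exp (ln u)) = (ln v - ln u) * (1 - (1 - exp z) ^ n)"
      using MVT2[OF \<open>ln u < ln v\<close>, of "\<lambda>t. harm_poly n (exp t)" "\<lambda>t. 1 - (1 - exp t) ^ n"]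
        has_real_derivative_harm_poly_exp by blast
    have "u \<le> exp z" "exp z \<le> v"
      using z assms by (metis exp_ln exp_less_mono less_imp_le order.strict_trans2 not_less)+
    then show ?thesis
      using eq assms by auto
  qed auto
  then obtain w where "u \<le> w" "w \<le> v"
    and eq: "harm_poly n v - harm_poly n u = (ln v - ln u) * (1 - (1 - w) ^ n)"
    by blast
  have "0 \<le> ln v - ln u"
    using assms by simp
  then show "(ln v - ln u) * (1 - (1 - u) ^ n) \<le> harm_poly n v - harm_poly n u"
    and "harm_poly n v - harm_poly n u \<le> (ln v - ln u) * (1 - (1 - v) ^ n)"
    unfolding eq using assms \<open>u \<le> w\<close> \<open>w \<le> v\<close> by (auto intro!: mult_left_mono mono)
qed

text \<open>\<open>\<Sum>\<^sub>j (1 - (1 - p * (1 - p) ^ j) ^ n)\<close> is a Riemann sum of mesh \<open>- ln (1 - p)\<close> for the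
  integral in \<open>t\<close> of the derivative of \<open>harm_poly n (exp t)\<close>, whose integrand is monotone.\<close>

lemma harm_poly_geometric_step:
  fixes p :: real
  assumes "0 < p" "p < 1"
  shows "- ln (1 - p) * (1 - (1 - p * (1 - p) ^ Suc j) ^ n)
      \<le> harm_poly n (p * (1 - p) ^ j) - harm_poly n (p * (1 - p) ^ Suc j)"
    and "harm_poly n (p * (1 - p) ^ j) - harm_poly n (p * (1 - p) ^ Suc j)
      \<le> - ln (1 - p) * (1 - (1 - p * (1 - p) ^ j) ^ n)"
proof -
  have "ln (p * (1 - p) ^ j) - ln (p * (1 - p) ^ Suc j) = - ln (1 - p)"
    using assms by (simp add: ln_mult)
  moreover have "0 < p * (1 - p) ^ Suc j" "p * (1 - p) ^ Suc j \<le> p * (1 - p) ^ j" "p * (1 - p) ^ j \<le> 1"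
    using assms by (auto simp: mult_le_one power_le_one)
  ultimately show "- ln (1 - p) * (1 - (1 - p * (1 - p) ^ Suc j) ^ n)
      \<le> harm_poly n (p * (1 - p) ^ j) - harm_poly n (p * (1 - p) ^ Suc j)"
    and "harm_poly n (p * (1 - p) ^ j) - harm_poly n (p * (1 - p) ^ Suc j)
      \<le> - ln (1 - p) * (1 - (1 - p * (1 - p) ^ j) ^ n)"
    using harm_poly_diff_bounds[of "p * (1 - p) ^ Suc j" "p * (1 - p) ^ j" n] by simp_all
qed

lemma harm_poly_telescope:
  "(\<Sum>j<N. harm_poly n (p * (1 - p) ^ j) - harm_poly n (p * (1 - p) ^ Suc j))
    = harm_poly n p - harm_poly n (p * (1 - p) ^ N)"
  by (subst sum_lessThan_telescope') simp

lemma suminf_one_minus_power_geometric_lower: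
  fixes p :: real
  assumes "0 < p" "p < 1"
  shows "harm_poly n p / - ln (1 - p) \<le> (\<Sum>j. 1 - (1 - p * (1 - p) ^ j) ^ n)"
proof -
  define a where "a = (\<lambda>j. 1 - (1 - p * (1 - p) ^ j) ^ n)"
  have "(\<lambda>N. p * (1 - p) ^ N) \<longlonglongrightarrow> p * 0"
    using assms by (intro tendsto_mult tendsto_const LIMSEQ_realpow_zero) auto
  then have "(\<lambda>N. harm_poly n p - harm_poly n (p * (1 - p) ^ N)) \<longlonglongrightarrow> harm_poly n p - harm_poly n 0"
    by (intro tendsto_diff tendsto_const isCont_tendsto_compose[OF isCont_harm_poly]) simp
  moreover have "(\<lambda>N. - ln (1 - p) * (\<Sum>j<N. a j)) \<longlonglongrightarrow> - ln (1 - p) * suminf a"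
    unfolding a_def by (intro tendsto_intros summable_LIMSEQ summable_one_minus_power_geometric[OF assms])
  moreover have "harm_poly n p - harm_poly n (p * (1 - p) ^ N) \<le> - ln (1 - p) * (\<Sum>j<N. a j)" for N
    unfolding harm_poly_telescope[symmetric] sum_distrib_left a_def
    by (intro sum_mono harm_poly_geometric_step(2)[OF assms])
  ultimately have "harm_poly n p \<le> suminf a * - ln (1 - p)"
    by (auto intro: LIMSEQ_le simp: mult.commute)
  moreover have "0 < - ln (1 - p)"
    using assms by simp
  ultimately show ?thesis
    unfolding a_def by (subst pos_divide_le_eq)
qed

lemma suminf_one_minus_power_geometric_upper:
  fixes p :: real
  assumes "0 < p" "p < 1"
  shows "(\<Sum>j. 1 - (1 - p * (1 - p) ^ j) ^ n) \<le> harm_poly n p / - ln (1 - p) + 1"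
proof -
  define a where "a = (\<lambda>j. 1 - (1 - p * (1 - p) ^ j) ^ n)"
  have summable: "summable a"
    unfolding a_def by (rule summable_one_minus_power_geometric[OF assms])
  have "0 < - ln (1 - p)"
    using assms by simp
  have "(\<Sum>j<N. a (Suc j)) \<le> harm_poly n p / - ln (1 - p)" for N
  proof -
    have "- ln (1 - p) * (\<Sum>j<N. a (Suc j)) \<le> harm_poly n p - harm_poly n (p * (1 - p) ^ N)"
      unfolding harm_poly_telescope[symmetric] sum_distrib_left a_def
      by (intro sum_mono harm_poly_geometric_step(1)[OF assms])
    also have "\<dots> \<le> harm_poly n p"
      using assms harm_poly_nonneg[of "p * (1 - p) ^ N" n] by (simp add: mult_le_one power_le_one)
    finally show ?thesis
      using \<open>0 < - ln (1 - p)\<close> by (subst pos_le_divide_eq) (simp_all only: mult.commute)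
  qed
  then have "(\<Sum>j. a (Suc j)) \<le> harm_poly n p / - ln (1 - p)"
    using summable by (intro suminf_le_const) (simp_all add: summable_Suc_iff)
  moreover have "suminf a = (\<Sum>j. a (Suc j)) + a 0"
    using suminf_split_head[OF summable] by simp
  moreover have "a 0 \<le> 1"
    using assms by (simp add: a_def)
  ultimately show ?thesis
    by (simp add: a_def)
qed

definition log_harm :: "nat \<Rightarrow> real" where
  "log_harm n = (\<Sum>k<n. ln (real k + 2) / (real k + 1))"

lemma has_integral_harm_poly_div_ln:
  "((\<lambda>p. harm_poly n p / - ln (1 - p)) has_integral log_harm n) {0..1}"
proof -
  have "((\<lambda>p. \<Sum>k<n. 1 / real (Suc k) * ((1 - (1 - p) ^ Suc k) / - ln (1 - p))) has_integral
      (\<Sum>k<n. 1 / real (Suc k) * ln (real (Suc k) + 1))) {0..1}"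
    by (intro has_integral_sum has_integral_mult_right has_integral_one_minus_power_div_ln) auto
  moreover have "(\<lambda>p. \<Sum>k<n. 1 / real (Suc k) * ((1 - (1 - p) ^ Suc k) / - ln (1 - p)))
      = (\<lambda>p. harm_poly n p / - ln (1 - p))"
    by (auto simp: harm_poly_def sum_divide_distrib sum_negf mult.commute)
  moreover have "(\<Sum>k<n. 1 / real (Suc k) * ln (real (Suc k) + 1)) = log_harm n"
    unfolding log_harm_def by (intro sum.cong) (simp_all add: add.commute)
  ultimately show ?thesis
    by simp
qed

lemma EK_estimate: "\<bar>EK n - log_harm n\<bar> \<le> 1"
proof -
  define S :: "real \<Rightarrow> real" where "S = (\<lambda>p. indicator {0<..<1} p * (\<Sum>j. 1 - (1 - p * (1 - p) ^ j) ^ n))"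
  define Phi :: "real \<Rightarrow> real" where "Phi = (\<lambda>p. harm_poly n p / - ln (1 - p))"
  have "S \<in> borel_measurable borel"
  proof (rule borel_measurable_LIMSEQ_real)
    show "(\<lambda>p::real. indicator {0<..<1} p * (\<Sum>j<N. 1 - (1 - p * (1 - p) ^ j) ^ n))
        \<in> borel_measurable borel"
      for N by measurable
    show "(\<lambda>N. indicator {0<..<1} p * (\<Sum>j<N. 1 - (1 - p * (1 - p) ^ j) ^ n)) \<longlonglongrightarrow> S p" for p
      unfolding S_def
      by (cases "p \<in> {0<..<1}") (auto intro!: tendsto_intros summable_LIMSEQ summable_one_minus_power_geometric)
  qed
  moreover have "Phi \<in> borel_measurable borel"
    unfolding Phi_def harm_poly_def by measurable
  moreover have "(Phi has_integral log_harm n) {0<..<1}"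
    using has_integral_harm_poly_div_ln by (simp add: Phi_def has_integral_Icc_iff_Ioo)
  moreover have "0 \<le> Phi p" if "p \<in> {0<..<1}" for p
    unfolding Phi_def by (rule divide_nonneg_nonneg) (use that harm_poly_nonneg[of p n] in auto)
  moreover have "Phi p \<le> S p \<and> S p \<le> Phi p + 1" if "p \<in> {0<..<1}" for p
    using that suminf_one_minus_power_geometric_lower[of p n] suminf_one_minus_power_geometric_upper[of p n]
    by (simp add: Phi_def S_def)
  ultimately have "\<bar>(LBINT p:{0<..<1}. S p) - log_harm n\<bar> \<le> 1 * (1 - 0)"
    by (intro set_integral_squeeze_Ioo) auto
  moreover have "EK n = (LBINT p:{0<..<1}. S p)"
    unfolding EK_def using expectation_K_sample_pmf
    by (intro set_lebesgue_integral_cong) (auto simp: S_def)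
  ultimately show ?thesis
    by simp
qed

lemma ln_succ_minus_ln_bounds:
  fixes x :: real
  assumes "0 < x"
  shows "1 / (x + 1) \<le> ln (x + 1) - ln x" "ln (x + 1) - ln x \<le> 1 / x"
proof -
  have "ln (x + 1) - ln x = ln ((x + 1) / x)"
    using assms by (simp add: ln_div)
  also have "(x + 1) / x = 1 + 1 / x"
    using assms by (simp add: field_simps)
  also have "ln (1 + 1 / x) \<le> 1 / x"
    using assms by (intro ln_add_one_self_le_self) auto
  finally show "ln (x + 1) - ln x \<le> 1 / x" .
  have "ln (x / (x + 1)) \<le> x / (x + 1) - 1"
    using assms by (intro ln_le_minus_one) auto
  then show "1 / (x + 1) \<le> ln (x + 1) - ln x"
    using assms by (simp add: ln_div field_simps)
qed

lemma log_harm_increment_error_bound: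
  fixes x :: real
  assumes "1 \<le> x"
  shows "\<bar>ln (x + 2) / (x + 1) - ((ln (x + 1))\<^sup>2 - (ln x)\<^sup>2) / 2\<bar> \<le> (ln (x + 1) + 2) / x\<^sup>2"
proof -
  define l where "l = ln (x + 1)"
  define a where "a = ln (x + 1) - ln x"
  define b where "b = ln (x + 2) - ln (x + 1)"
  have a: "1 / (x + 1) \<le> a" "a \<le> 1 / x"
    using ln_succ_minus_ln_bounds[of x] assms by (auto simp: a_def)
  have b: "0 \<le> b" "b \<le> 1 / (x + 1)"
    using ln_succ_minus_ln_bounds[of "x + 1"] assms by (auto simp: b_def add.assoc)
  have "0 \<le> l" "0 \<le> a"
    using assms a by (auto simp: l_def intro: order_trans[rotated])
  have "ln (x + 2) / (x + 1) - ((ln (x + 1))\<^sup>2 - (ln x)\<^sup>2) / 2 = l * (1 / (x + 1) - a) + b / (x + 1) + a\<^sup>2 / 2"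
  proof -
    have "ln (x + 2) = l + b" "ln x = l - a"
      by (simp_all add: a_def b_def l_def)
    moreover have "(l\<^sup>2 - (l - a)\<^sup>2) / 2 = l * a - a\<^sup>2 / 2"
      by (simp add: power2_eq_square field_simps)
    then have "(l + b) / (x + 1) - (l\<^sup>2 - (l - a)\<^sup>2) / 2 = l * (1 / (x + 1) - a) + b / (x + 1) + a\<^sup>2 / 2"
      by (simp add: add_divide_distrib right_diff_distrib diff_divide_distrib)
    ultimately show ?thesis
      by (simp only: l_def[symmetric])
  qed
  moreover have "\<bar>l * (1 / (x + 1) - a)\<bar> \<le> l / x\<^sup>2"
  proof -
    have "\<bar>1 / (x + 1) - a\<bar> \<le> 1 / x - 1 / (x + 1)"
      using a by auto
    also have "\<dots> = 1 / (x * (x + 1))"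
      using assms by (simp add: field_simps)
    also have "\<dots> \<le> 1 / x\<^sup>2"
      using assms by (intro divide_left_mono) (auto simp: power2_eq_square)
    finally show ?thesis
      using \<open>0 \<le> l\<close> by (simp add: abs_mult divide_inverse mult_left_mono)
  qed
  moreover have "\<bar>b / (x + 1)\<bar> \<le> 1 / x\<^sup>2"
  proof -
    have "b / (x + 1) \<le> 1 / (x + 1)\<^sup>2"
      using b assms by (simp add: divide_right_mono power2_eq_square flip: divide_divide_eq_left)
    also have "\<dots> \<le> 1 / x\<^sup>2"
      using assms by (intro divide_left_mono power_mono) auto
    finally show ?thesis
      using b assms by simp
  qed
  moreover have "\<bar>a\<^sup>2 / 2\<bar> \<le> 1 / x\<^sup>2"
  proof -
    have "a\<^sup>2 \<le> (1 / x)\<^sup>2"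
      using a \<open>0 \<le> a\<close> by (intro power_mono) auto
    moreover have "1 / x\<^sup>2 \<le> 2 / x\<^sup>2"
      by (simp add: divide_right_mono)
    ultimately show ?thesis
      by (simp add: power_divide)
  qed
  ultimately have "\<bar>ln (x + 2) / (x + 1) - ((ln (x + 1))\<^sup>2 - (ln x)\<^sup>2) / 2\<bar> \<le> l / x\<^sup>2 + 1 / x\<^sup>2 + 1 / x\<^sup>2"
    using abs_triangle_ineq[of "l * (1 / (x + 1) - a) + b / (x + 1)" "a\<^sup>2 / 2"]
      abs_triangle_ineq[of "l * (1 / (x + 1) - a)" "b / (x + 1)"]
    by linarith
  then show ?thesis
    by (simp add: l_def add_divide_distrib)
qed

lemma log_harm_minus_half_ln_squared_bigo:
  "(\<lambda>n. log_harm n - (1/2) * (ln (real n))\<^sup>2) \<in> O(\<lambda>_. 1)"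
proof -
  define d where "d = (\<lambda>k::nat. ln (real k + 2) / (real k + 1)
    - ((ln (real k + 1))\<^sup>2 - (ln (real k))\<^sup>2) / 2)"
  have "summable (\<lambda>k. \<bar>d k\<bar>)"
  proof (rule summable_comparison_test)
    have "(\<lambda>k::nat. (ln (real k + 1) + 2) / (real k)\<^sup>2) \<in> O(\<lambda>k. real k powr (-3/2))"
      by real_asymp
    then show "summable (\<lambda>k. (ln (real k + 1) + 2) / (real k)\<^sup>2)"
      by (rule summable_comparison_test_bigo[rotated]) (simp add: summable_real_powr_iff)
    show "\<exists>N. \<forall>k\<ge>N. norm \<bar>d k\<bar> \<le> (ln (real k + 1) + 2) / (real k)\<^sup>2"
      using log_harm_increment_error_bound by (auto simp: d_def intro!: exI[of _ 1])
  qed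
  have "log_harm n - (1/2) * (ln (real n))\<^sup>2 = (\<Sum>k<n. d k)" for n
  proof -
    have "(\<Sum>k<n. (ln (real (Suc k)))\<^sup>2 / 2 - (ln (real k))\<^sup>2 / 2) = (ln (real n))\<^sup>2 / 2"
      by (subst sum_lessThan_telescope) simp
    then show ?thesis
      by (simp add: d_def log_harm_def sum_subtractf diff_divide_distrib add.commute)
  qed
  moreover have "\<bar>\<Sum>k<n. d k\<bar> \<le> (\<Sum>k. \<bar>d k\<bar>)" for n
    by (rule order_trans[OF sum_abs sum_le_suminf[OF \<open>summable (\<lambda>k. \<bar>d k\<bar>)\<close>]]) auto
  ultimately have "\<bar>log_harm n - (1/2) * (ln (real n))\<^sup>2\<bar> \<le> (\<Sum>k. \<bar>d k\<bar>)" for n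
    by simp
  then show ?thesis
    by (intro bigoI[where c = "\<Sum>k. \<bar>d k\<bar>"]) auto
qed

theorem proposition1:
  shows "(\<lambda>x. nu x - ((1/2) * (ln (1/x))^2 - euler_mascheroni * ln (1/x)))
           \<in> O[at_right 0](\<lambda>_. 1) \<and>
         (\<lambda>n. EK n - (1/2) * (ln (real n))^2) \<in> o(\<lambda>n. ln (real n))"
proof
  have "\<forall>x. 0 < x \<and> x < 1 \<longrightarrow>
      norm (nu x - ((1/2) * (ln (1/x))^2 - euler_mascheroni * ln (1/x))) \<le> 3 * norm (1::real)"
    using nu_estimate by simp
  then show "(\<lambda>x. nu x - ((1/2) * (ln (1/x))^2 - euler_mascheroni * ln (1/x))) \<in> O[at_right 0](\<lambda>_. 1)"
    by (intro bigoI[where c = 3]) (auto simp: eventually_at_right_field intro!: exI[of _ 1])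
  have "(\<lambda>n. EK n - log_harm n) \<in> O(\<lambda>_. 1)"
    using EK_estimate by (intro bigoI[where c = 1]) auto
  from sum_in_bigo(1)[OF this log_harm_minus_half_ln_squared_bigo]
  have "(\<lambda>n. EK n - (1/2) * (ln (real n))^2) \<in> O(\<lambda>_. 1)"
    by simp
  moreover have "(\<lambda>_::nat. 1::real) \<in> o(\<lambda>n. ln (real n))"
    by real_asymp
  ultimately show "(\<lambda>n. EK n - (1/2) * (ln (real n))^2) \<in> o(\<lambda>n. ln (real n))"
    by (rule landau_o.big_small_trans)
qed

end
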